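(* Let $r\ge 2$ and let $p=p(n)$ satisfy $p=\omega(n^{-1})$ and $p=o(n^{-1/r})$, and let $t_0:=(r!/(np^r))^{1/(r-1)}$. In the exploration process for bootstrap percolation on $G(n,p)$ described in the context, let $S\subset[n]$ with $|S|=o(n)$. Conditional on the event $T\ge t_0$ and on the sets $\mathcal{A}(t_0)$ and $\mathcal{Z}(t_0)$, with probability $1-\exp(-\Omega(p^{-1}))$ the number of vertices in $[n]\setminus(\mathcal{Z}(t_0)\cup S)$ having at least $r-1$ neighbours in $\mathcal{Z}(t_0)$ is at least $3rp^{-1}/4$.
   Context: $G(n,p)$ is the random graph on $[n]$ with each edge independently present with probability $p$. The initially infected set is $\mathcal{A}(0)=\{1,\dots,a\}$ (infection threshold $r$). Exploration process: set $\mathcal{Z}(0)=\emptyset$. For each step $t=1,\dots,n$: if $\mathcal{A}(t-1)\setminus\mathcal{Z}(t-1)\neq\emptyset$, pick a vertex $u_t$ in it by an arbitrary rule and set $\mathcal{Z}(t)=\mathcal{Z}(t-1)\cup\{u_t\}$; otherwise $\mathcal{Z}(t)=\mathcal{Z}(t-1)$. For $t\ge0$ and $i\in[n-a]$ let $X(t,i)$ be the indicator that vertex $a+i$ has at least $r$ neighbours in $\mathcal{Z}(t)$, and set $\mathcal{A}(t)=\mathcal{A}(0)\cup\{a+i: X(t,i)=1,\ i\in[n-a]\}$. $T$ is the smallest $t$ with $\mathcal{A}(t)=\mathcal{Z}(t)$. Asymptotic notation refers to $n\to\infty$. *)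

theory Defs
  imports "HOL-Probability.Probability" "HOL-Library.Landau_Symbols"
begin

(* Vertex set [n] = {1..n}; a graph is given by its edge indicator on 2-element sets. *)
definition all_edges :: "nat \<Rightarrow> nat set set" where
  "all_edges n = {e. \<exists>i j. e = {i, j} \<and> i \<noteq> j \<and> i \<in> {1..n} \<and> j \<in> {1..n}}"

definition gnp :: "nat \<Rightarrow> real \<Rightarrow> (nat set \<Rightarrow> bool) pmf" where
  "gnp n p = Pi_pmf (all_edges n) False (\<lambda>_. bernoulli_pmf p)"

definition adj :: "(nat set \<Rightarrow> bool) \<Rightarrow> nat \<Rightarrow> nat \<Rightarrow> bool" where
  "adj G u v \<longleftrightarrow> u \<noteq> v \<and> G {u, v}"

definition infected :: "nat \<Rightarrow> nat \<Rightarrow> nat \<Rightarrow> (nat set \<Rightarrow> bool) \<Rightarrow> nat set \<Rightarrow> nat set" where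
  "infected n a r G Z = {1..a} \<union> {v \<in> {a+1..n}. r \<le> card {z \<in> Z. adj G v z}}"

(* The exploration process: list of chosen vertices u_1,u_2,... up to step t.
   The rule picks u_t from the history and the current infected set. *)
primrec explore :: "nat \<Rightarrow> nat \<Rightarrow> nat \<Rightarrow> (nat list \<Rightarrow> nat set \<Rightarrow> nat) \<Rightarrow>
                    (nat set \<Rightarrow> bool) \<Rightarrow> nat \<Rightarrow> nat list" where
  "explore n a r rule G 0 = []"
| "explore n a r rule G (Suc t) =
     (let us = explore n a r rule G t; A = infected n a r G (set us) in
      if A - set us \<noteq> {} then us @ [rule us A] else us)"

definition Zp :: "nat \<Rightarrow> nat \<Rightarrow> nat \<Rightarrow> (nat list \<Rightarrow> nat set \<Rightarrow> nat) \<Rightarrow>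
                    (nat set \<Rightarrow> bool) \<Rightarrow> nat \<Rightarrow> nat set" where
  "Zp n a r rule G t = set (explore n a r rule G t)"

definition Ap :: "nat \<Rightarrow> nat \<Rightarrow> nat \<Rightarrow> (nat list \<Rightarrow> nat set \<Rightarrow> nat) \<Rightarrow>
                    (nat set \<Rightarrow> bool) \<Rightarrow> nat \<Rightarrow> nat set" where
  "Ap n a r rule G t = infected n a r G (Zp n a r rule G t)"

definition stop_time :: "nat \<Rightarrow> nat \<Rightarrow> nat \<Rightarrow> (nat list \<Rightarrow> nat set \<Rightarrow> nat) \<Rightarrow>
                    (nat set \<Rightarrow> bool) \<Rightarrow> nat" where
  "stop_time n a r rule G = (LEAST t. Ap n a r rule G t = Zp n a r rule G t)"

definition t0 :: "nat \<Rightarrow> nat \<Rightarrow> real \<Rightarrow> nat" where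
  "t0 r n p = nat \<lfloor>(fact r / (real n * p ^ r)) powr (1 / (real r - 1))\<rfloor>"

end

theory Submission
  imports Defs
begin

text \<open>Condition on the history up to time \<open>t = t\<^sub>0\<close>, which fixes \<open>Z0 = Z(t)\<close> with \<open>|Z0| = t\<close> and
  \<open>A0 = A(t)\<close>. Outside \<open>Z0 \<union> S\<close>, a vertex of \<open>A0\<close> above \<open>a\<close> already has at least \<open>r\<close>
  neighbours in \<open>Z0\<close>, and about any other (``free'') vertex the history only says that it has
  fewer than \<open>r\<close> neighbours in \<open>Z0\<close> unless it is initially infected. Deleting all edges between
  free vertices and \<open>Z0\<close> does not change the history, so the history event factorises into an
  event on the other edges and one threshold event per free vertex, on independent blocks of
  edges. A free vertex has exactly \<open>r - 1\<close> neighbours in \<open>Z0\<close> with probability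
  \<open>Bin(t, p)(r - 1) \<approx> r / (n p)\<close>, an event inside its threshold event, so the expected number of
  vertices with at least \<open>r - 1\<close> neighbours in \<open>Z0\<close> is at least \<open>(9/10) r / p\<close>. An exponential
  moment bound with weight \<open>exp (- N / 10)\<close>, computed block by block, then shows that fewer than
  \<open>3r/(4p)\<close> of them occur with conditional probability at most \<open>exp (-1/(100 p))\<close>.\<close>

section \<open>The exploration process\<close>

definition deg_in :: "(nat set \<Rightarrow> bool) \<Rightarrow> nat set \<Rightarrow> nat \<Rightarrow> nat" where
  "deg_in G Z v = card {z \<in> Z. adj G v z}"

lemma set_explore_mono:
  assumes "s \<le> t"
  shows "set (explore n a r rule G s) \<subseteq> set (explore n a r rule G t)"
  using assms
proof (induction t)
  case (Suc t)
  have "set (explore n a r rule G t) \<subseteq> set (explore n a r rule G (Suc t))"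
    by (auto simp: Let_def)
  with Suc show ?case
    by (cases "s = Suc t") auto
qed simp

lemma infected_mono:
  assumes "finite Z'" "Z \<subseteq> Z'"
  shows "infected n a r G Z \<subseteq> infected n a r G Z'"
proof -
  have "card {z \<in> Z. adj G v z} \<le> card {z \<in> Z'. adj G v z}" for v
    using assms by (intro card_mono) auto
  then show ?thesis
    unfolding infected_def by (auto intro: le_trans)
qed

lemma infected_eq_if_agree:
  assumes "finite Z0" "Y \<subseteq> Z0"
    and agree: "\<And>v. v \<in> {a+1..n} \<Longrightarrow>
      (\<forall>z\<in>Z0. adj G v z = adj G' v z) \<or> (deg_in G Z0 v < r \<and> deg_in G' Z0 v < r)"
  shows "infected n a r G Y = infected n a r G' Y"
proof -
  have "r \<le> card {z \<in> Y. adj G v z} \<longleftrightarrow> r \<le> card {z \<in> Y. adj G' v z}"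
    if v: "v \<in> {a+1..n}" for v
  proof (cases "\<forall>z\<in>Z0. adj G v z = adj G' v z")
    case True
    then have "{z \<in> Y. adj G v z} = {z \<in> Y. adj G' v z}"
      using \<open>Y \<subseteq> Z0\<close> by auto
    then show ?thesis by simp
  next
    case False
    then have "deg_in G Z0 v < r" "deg_in G' Z0 v < r"
      using agree[OF v] by auto
    moreover have "card {z \<in> Y. adj H v z} \<le> deg_in H Z0 v" for H
      unfolding deg_in_def using assms(1,2) by (intro card_mono) auto
    ultimately show ?thesis
      by (meson le_trans not_le)
  qed
  then show ?thesis
    unfolding infected_def by blast
qed

lemma explore_eq_if_infected_eq:
  assumes "set (explore n a r rule G t) \<subseteq> Z0"
    and "\<And>Y. Y \<subseteq> Z0 \<Longrightarrow> infected n a r G Y = infected n a r G' Y"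
    and "s \<le> t"
  shows "explore n a r rule G' s = explore n a r rule G s"
  using \<open>s \<le> t\<close>
proof (induction s)
  case (Suc s)
  have "set (explore n a r rule G s) \<subseteq> Z0"
    using set_explore_mono[of s t] Suc.prems assms(1) by force
  with Suc assms(2) show ?case
    by (simp add: Let_def)
qed simp

locale exploration =
  fixes n a r :: nat and rule :: "nat list \<Rightarrow> nat set \<Rightarrow> nat"
  assumes rule_picks: "\<And>us A. A - set us \<noteq> {} \<Longrightarrow> rule us A \<in> A - set us"
    and initial_le: "a \<le> n"
begin

lemma distinct_explore: "distinct (explore n a r rule G t)"
  by (induction t) (use rule_picks in \<open>auto simp: Let_def\<close>)

lemma set_explore_subset: "set (explore n a r rule G t) \<subseteq> {1..n}"
proof (induction t)
  case (Suc t)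
  let ?us = "explore n a r rule G t"
  let ?A = "infected n a r G (set ?us)"
  have "?A \<subseteq> {1..n}"
    using initial_le unfolding infected_def by auto
  then have "?A - set ?us \<noteq> {} \<Longrightarrow> rule ?us ?A \<in> {1..n}"
    using rule_picks by blast
  with Suc show ?case
    by (simp add: Let_def)
qed simp

lemma set_explore_subset_infected:
  "set (explore n a r rule G t) \<subseteq> infected n a r G (set (explore n a r rule G t))"
proof (induction t)
  case (Suc t)
  let ?us = "explore n a r rule G t"
  let ?A = "infected n a r G (set ?us)"
  have mono: "?A \<subseteq> infected n a r G (set (explore n a r rule G (Suc t)))"
    by (intro infected_mono set_explore_mono) auto
  show ?case
  proof (cases "?A - set ?us = {}")
    case False
    then have "rule ?us ?A \<in> ?A"
      using rule_picks by blast
    with Suc mono False show ?thesis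
      by (auto simp: Let_def)
  qed (use Suc in \<open>simp add: Let_def\<close>)
qed simp

lemma length_explore:
  assumes "\<forall>s<t. Ap n a r rule G s \<noteq> Zp n a r rule G s"
  shows "length (explore n a r rule G t) = t"
  using assms
proof (induction t)
  case (Suc t)
  let ?us = "explore n a r rule G t"
  have "infected n a r G (set ?us) \<noteq> set ?us"
    using Suc.prems by (auto simp: Ap_def Zp_def)
  then have "infected n a r G (set ?us) - set ?us \<noteq> {}"
    using set_explore_subset_infected[of G t] by auto
  with Suc show ?case
    by (simp add: Let_def)
qed simp

text \<open>The process explores distinct vertices of \<open>[n]\<close>, so it stops within \<open>n\<close> steps.\<close>

lemma stop_time_exists: "\<exists>t. Ap n a r rule G t = Zp n a r rule G t"
proof (rule ccontr)
  assume "\<not> ?thesis"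
  then have "card (set (explore n a r rule G (Suc n))) = Suc n"
    using length_explore distinct_card[OF distinct_explore]
    by (simp del: explore.simps)
  moreover have "card (set (explore n a r rule G (Suc n))) \<le> n"
    using card_mono[OF finite_atLeastAtMost set_explore_subset]
    by (simp del: explore.simps)
  ultimately show False
    by simp
qed

lemma le_stop_time_iff:
  "t \<le> stop_time n a r rule G \<longleftrightarrow> (\<forall>s<t. Ap n a r rule G s \<noteq> Zp n a r rule G s)"
proof
  assume "t \<le> stop_time n a r rule G"
  then show "\<forall>s<t. Ap n a r rule G s \<noteq> Zp n a r rule G s"
    unfolding stop_time_def using not_less_Least less_le_trans by blast
next
  assume "\<forall>s<t. Ap n a r rule G s \<noteq> Zp n a r rule G s"
  then show "t \<le> stop_time n a r rule G"
    using LeastI_ex[OF stop_time_exists] unfolding stop_time_def by (meson not_le)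
qed

lemma card_Zp:
  assumes "t \<le> stop_time n a r rule G"
  shows "card (Zp n a r rule G t) = t"
proof -
  have "length (explore n a r rule G t) = t"
    using assms length_explore unfolding le_stop_time_iff by blast
  then show ?thesis
    unfolding Zp_def using distinct_card[OF distinct_explore] by simp
qed

definition history :: "nat \<Rightarrow> nat set \<Rightarrow> nat set \<Rightarrow> (nat set \<Rightarrow> bool) set" where
  "history t A0 Z0 =
     {G. t \<le> stop_time n a r rule G \<and> Ap n a r rule G t = A0 \<and> Zp n a r rule G t = Z0}"

text \<open>Up to time \<open>t\<close> the process sees a vertex above \<open>a\<close> only through its edges to \<open>Z0\<close>,
  and only through the threshold \<open>r\<close>: a graph that agrees with such a graph in this sense has the
  same history.\<close>

lemma history_transfer:
  assumes G: "G \<in> history t A0 Z0"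
    and agree: "\<And>v. v \<in> {a+1..n} \<Longrightarrow>
      (\<forall>z\<in>Z0. adj G v z = adj G' v z) \<or> (deg_in G Z0 v < r \<and> deg_in G' Z0 v < r)"
  shows "G' \<in> history t A0 Z0"
proof -
  have Z0: "set (explore n a r rule G t) = Z0"
    using G unfolding history_def Zp_def by auto
  have inf: "infected n a r G Y = infected n a r G' Y" if "Y \<subseteq> Z0" for Y
    using infected_eq_if_agree[OF _ that agree] Z0 by blast
  have explore_eq: "explore n a r rule G' s = explore n a r rule G s" if "s \<le> t" for s
    using explore_eq_if_infected_eq[OF _ inf that] Z0 by blast
  have "infected n a r G (set (explore n a r rule G s)) =
        infected n a r G' (set (explore n a r rule G s))" if "s \<le> t" for s
    using inf set_explore_mono[OF that] Z0 by blast
  with explore_eq have eq: "Ap n a r rule G' s = Ap n a r rule G s" "Zp n a r rule G' s = Zp n a r rule G s"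
    if "s \<le> t" for s
    using that by (simp_all add: Ap_def Zp_def)
  from G have stop: "\<forall>s<t. Ap n a r rule G s \<noteq> Zp n a r rule G s"
    and A0: "Ap n a r rule G t = A0" and Z0': "Zp n a r rule G t = Z0"
    unfolding history_def le_stop_time_iff by auto
  have "\<forall>s<t. Ap n a r rule G' s \<noteq> Zp n a r rule G' s"
    using stop eq by (metis less_imp_le)
  moreover have "Ap n a r rule G' t = A0" "Zp n a r rule G' t = Z0"
    using eq[of t] A0 Z0' by auto
  ultimately show ?thesis
    unfolding history_def le_stop_time_iff by blast
qed

end

section \<open>Functions of independent blocks of edges\<close>

definition depends_only_on :: "'a set \<Rightarrow> (('a \<Rightarrow> 'b) \<Rightarrow> 'c) \<Rightarrow> bool" where
  "depends_only_on X f \<longleftrightarrow> (\<forall>G G'. (\<forall>e\<in>X. G e = G' e) \<longrightarrow> f G = f G')"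

lemma depends_only_on_mono: "depends_only_on X f \<Longrightarrow> X \<subseteq> Y \<Longrightarrow> depends_only_on Y f"
  unfolding depends_only_on_def by blast

lemma depends_only_on_comp:
  "depends_only_on X f \<Longrightarrow> depends_only_on X (\<lambda>G. c (f G))"
  unfolding depends_only_on_def by metis

lemma depends_only_on_mult:
  fixes f g :: "('a \<Rightarrow> 'b) \<Rightarrow> real"
  shows "depends_only_on X f \<Longrightarrow> depends_only_on X g \<Longrightarrow> depends_only_on X (\<lambda>G. f G * g G)"
  unfolding depends_only_on_def by metis

lemma depends_only_on_prod:
  fixes g :: "'v \<Rightarrow> ('a \<Rightarrow> 'b) \<Rightarrow> real"
  assumes "\<And>v. v \<in> W \<Longrightarrow> depends_only_on X (g v)"
  shows "depends_only_on X (\<lambda>G. \<Prod>v\<in>W. g v G)"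
  using assms unfolding depends_only_on_def by (auto intro!: prod.cong)

lemma finite_set_Pi_pmf:
  fixes Q :: "'a \<Rightarrow> 'b::finite pmf"
  assumes "finite E"
  shows "finite (set_pmf (Pi_pmf E d Q))"
  unfolding set_Pi_pmf[OF assms] by (intro finite_PiE_dflt assms) auto

lemma expectation_pair_pmf_mult:
  fixes f :: "'a \<Rightarrow> real" and g :: "'b \<Rightarrow> real"
  assumes "finite (set_pmf P)" "finite (set_pmf Q)"
  shows "measure_pmf.expectation (pair_pmf P Q) (\<lambda>x. f (fst x) * g (snd x)) =
         measure_pmf.expectation P f * measure_pmf.expectation Q g"
proof -
  have "measure_pmf.expectation (pair_pmf P Q) (\<lambda>x. f (fst x) * g (snd x)) =
     (\<Sum>x\<in>set_pmf P \<times> set_pmf Q. f (fst x) * g (snd x) * pmf (pair_pmf P Q) x)"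
    using assms by (intro integral_measure_pmf_real) (auto simp: set_pmf_eq pmf_pair)
  also have "\<dots> = (\<Sum>a\<in>set_pmf P. \<Sum>b\<in>set_pmf Q. (f a * pmf P a) * (g b * pmf Q b))"
    by (subst sum.cartesian_product) (auto simp: pmf_pair intro!: sum.cong)
  also have "\<dots> = (\<Sum>a\<in>set_pmf P. f a * pmf P a) * (\<Sum>b\<in>set_pmf Q. g b * pmf Q b)"
    by (simp add: sum_product)
  also have "\<dots> = measure_pmf.expectation P f * measure_pmf.expectation Q g"
    using assms by (subst (1 2) integral_measure_pmf_real[where A="set_pmf _"]) (auto simp: set_pmf_eq)
  finally show ?thesis .
qed

lemma expectation_Pi_pmf_mult:
  fixes Q :: "'a \<Rightarrow> 'b::finite pmf" and f g :: "('a \<Rightarrow> 'b) \<Rightarrow> real"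
  assumes "finite E" "A \<subseteq> E" "depends_only_on A f" "depends_only_on (- A) g"
  shows "measure_pmf.expectation (Pi_pmf E d Q) (\<lambda>G. f G * g G) =
         measure_pmf.expectation (Pi_pmf E d Q) f * measure_pmf.expectation (Pi_pmf E d Q) g"
proof -
  have fin: "finite A" "finite (E - A)"
    using assms(1,2) finite_subset by auto
  define merge :: "('a \<Rightarrow> 'b) \<times> ('a \<Rightarrow> 'b) \<Rightarrow> 'a \<Rightarrow> 'b"
    where "merge = (\<lambda>(G, G') e. if e \<in> A then G e else G' e)"
  have "Pi_pmf E d Q = Pi_pmf (A \<union> (E - A)) d Q"
    using assms(2) by (simp add: Un_absorb1)
  also have "\<dots> = map_pmf merge (pair_pmf (Pi_pmf A d Q) (Pi_pmf (E - A) d Q))"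
    unfolding merge_def using fin by (intro Pi_pmf_union) auto
  finally have split: "Pi_pmf E d Q = map_pmf merge (pair_pmf (Pi_pmf A d Q) (Pi_pmf (E - A) d Q))" .
  have f: "f (merge x) = f (fst x)" and g: "g (merge x) = g (snd x)" for x
    using assms(3,4) unfolding depends_only_on_def merge_def by (cases x; simp)+
  have "finite (set_pmf (Pi_pmf A d Q))" "finite (set_pmf (Pi_pmf (E - A) d Q))"
    using fin by (auto intro: finite_set_Pi_pmf)
  then show ?thesis
    unfolding split integral_map_pmf f g by (simp add: expectation_pair_pmf_mult)
qed

lemma expectation_Pi_pmf_prod_blocks:
  fixes Q :: "'a \<Rightarrow> 'b::finite pmf" and \<phi> :: "('a \<Rightarrow> 'b) \<Rightarrow> real"
    and g :: "'v \<Rightarrow> ('a \<Rightarrow> 'b) \<Rightarrow> real"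
  assumes "finite E" "finite W"
    and "\<And>v. v \<in> W \<Longrightarrow> F v \<subseteq> E"
    and "disjoint_family_on F W"
    and "depends_only_on (- (\<Union>v\<in>W. F v)) \<phi>"
    and "\<And>v. v \<in> W \<Longrightarrow> depends_only_on (F v) (g v)"
  shows "measure_pmf.expectation (Pi_pmf E d Q) (\<lambda>G. \<phi> G * (\<Prod>v\<in>W. g v G)) =
         measure_pmf.expectation (Pi_pmf E d Q) \<phi> *
         (\<Prod>v\<in>W. measure_pmf.expectation (Pi_pmf E d Q) (g v))"
  using assms(2-)
proof (induction W rule: finite_induct)
  case (insert v W)
  let ?E = "measure_pmf.expectation (Pi_pmf E d Q)"
  have "depends_only_on (- F v) (g w)" if "w \<in> W" for w
  proof (rule depends_only_on_mono)
    show "depends_only_on (F w) (g w)"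
      using insert.prems(4) that by simp
    have "v \<noteq> w"
      using insert.hyps(2) that by blast
    then show "F w \<subseteq> - F v"
      using insert.prems(2) that unfolding disjoint_family_on_def by auto
  qed
  moreover have "depends_only_on (- F v) \<phi>"
    using insert.prems(3) by (rule depends_only_on_mono) auto
  ultimately have rest: "depends_only_on (- F v) (\<lambda>G. \<phi> G * (\<Prod>w\<in>W. g w G))"
    by (intro depends_only_on_mult depends_only_on_prod)
  have "?E (\<lambda>G. \<phi> G * (\<Prod>w\<in>insert v W. g w G)) = ?E (\<lambda>G. g v G * (\<phi> G * (\<Prod>w\<in>W. g w G)))"
    using insert.hyps by (simp add: mult.left_commute)
  also have "\<dots> = ?E (g v) * ?E (\<lambda>G. \<phi> G * (\<Prod>w\<in>W. g w G))"
    using insert.prems by (intro expectation_Pi_pmf_mult[OF \<open>finite E\<close> _ _ rest]) auto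
  also have "?E (\<lambda>G. \<phi> G * (\<Prod>w\<in>W. g w G)) = ?E \<phi> * (\<Prod>w\<in>W. ?E (g w))"
  proof (rule insert.IH)
    show "disjoint_family_on F W"
      using insert.prems(2) by (rule disjoint_family_on_mono[rotated]) auto
    show "depends_only_on (- (\<Union>w\<in>W. F w)) \<phi>"
      using insert.prems(3) by (rule depends_only_on_mono) auto
  qed (use insert.prems in auto)
  finally show ?case
    using insert.hyps by (simp add: mult.left_commute)
qed simp

lemma expectation_le_mult_exp:
  fixes M :: "'x pmf" and h g :: "'x \<Rightarrow> real"
  assumes "finite (set_pmf M)"
    and h01: "\<And>x. 0 \<le> h x" "\<And>x. h x \<le> 1"
    and deficit: "\<And>x. g x \<le> h x - \<delta> * indicator D x"
    and "0 \<le> \<delta>"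
  shows "measure_pmf.expectation M g \<le> measure_pmf.expectation M h * exp (- (\<delta> * measure_pmf.prob M D))"
proof -
  let ?E = "measure_pmf.expectation M" and ?d = "\<delta> * measure_pmf.prob M D"
  have int: "integrable M f" for f :: "'x \<Rightarrow> real"
    using assms(1) by (rule integrable_measure_pmf_finite)
  have Eh: "0 \<le> ?E h" "?E h \<le> 1"
    using h01 integral_mono[OF int int, of h "\<lambda>_. 1"] by (auto intro: integral_nonneg_AE)
  have "?E g \<le> ?E (\<lambda>x. h x - \<delta> * indicator D x)"
    by (intro integral_mono int deficit)
  also have "\<dots> = ?E h - ?d"
    using int by simp
  also have "\<dots> \<le> ?E h * (1 - ?d)"
    using mult_left_le_one_le[of ?d "?E h"] Eh \<open>0 \<le> \<delta>\<close> by (simp add: algebra_simps)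
  also have "\<dots> \<le> ?E h * exp (- ?d)"
    using Eh exp_ge_add_one_self[of "- ?d"] by (intro mult_left_mono) auto
  finally show ?thesis .
qed

lemma expectation_prod_blocks_le:
  fixes Q :: "'a \<Rightarrow> 'b::finite pmf" and \<phi> :: "('a \<Rightarrow> 'b) \<Rightarrow> real"
    and g h :: "'v \<Rightarrow> ('a \<Rightarrow> 'b) \<Rightarrow> real" and E :: "'a set" and d :: 'b
  defines "M \<equiv> Pi_pmf E d Q"
  assumes "finite E" "finite W"
    and "\<And>v. v \<in> W \<Longrightarrow> F v \<subseteq> E"
    and "disjoint_family_on F W"
    and "depends_only_on (- (\<Union>v\<in>W. F v)) \<phi>" "\<And>G. 0 \<le> \<phi> G"
    and "\<And>v. v \<in> W \<Longrightarrow> depends_only_on (F v) (g v)"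
    and "\<And>v. v \<in> W \<Longrightarrow> depends_only_on (F v) (h v)"
    and g0: "\<And>v G. 0 \<le> g v G" and h1: "\<And>v G. h v G \<le> 1"
    and deficit: "\<And>v G. g v G \<le> h v G - \<delta> * indicator (D v) G" and "0 \<le> \<delta>"
    and prob_D: "\<And>v. v \<in> W \<Longrightarrow> measure_pmf.prob M (D v) = q"
  shows "measure_pmf.expectation M (\<lambda>G. \<phi> G * (\<Prod>v\<in>W. g v G)) \<le>
         exp (- (\<delta> * q) * card W) * measure_pmf.expectation M (\<lambda>G. \<phi> G * (\<Prod>v\<in>W. h v G))"
proof -
  let ?E = "measure_pmf.expectation M"
  have finM: "finite (set_pmf M)"
    unfolding M_def using \<open>finite E\<close> by (rule finite_set_Pi_pmf)
  have h0: "0 \<le> h v G" for v G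
    using g0[of v G] deficit[of v G] \<open>0 \<le> \<delta>\<close> by (smt (verit) indicator_pos_le mult_nonneg_nonneg)
  have "?E (\<lambda>G. \<phi> G * (\<Prod>v\<in>W. g v G)) = ?E \<phi> * (\<Prod>v\<in>W. ?E (g v))"
    unfolding M_def using assms by (intro expectation_Pi_pmf_prod_blocks) auto
  also have "\<dots> \<le> ?E \<phi> * (\<Prod>v\<in>W. ?E (h v) * exp (- (\<delta> * q)))"
    using expectation_le_mult_exp[OF finM h0 h1 deficit \<open>0 \<le> \<delta>\<close>] prob_D g0 assms(7)
    by (intro mult_left_mono prod_mono) (auto intro: integral_nonneg_AE)
  also have "\<dots> = exp (- (\<delta> * q) * card W) * (?E \<phi> * (\<Prod>v\<in>W. ?E (h v)))"
    by (simp add: prod.distrib exp_of_nat_mult[symmetric] mult_ac)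
  also have "?E \<phi> * (\<Prod>v\<in>W. ?E (h v)) = ?E (\<lambda>G. \<phi> G * (\<Prod>v\<in>W. h v G))"
    unfolding M_def using assms by (intro expectation_Pi_pmf_prod_blocks[symmetric]) auto
  finally show ?thesis .
qed

section \<open>Degrees in \<open>G(n,p)\<close>\<close>

lemma finite_all_edges: "finite (all_edges n)"
proof (rule finite_subset)
  show "all_edges n \<subseteq> Pow {1..n}"
    unfolding all_edges_def by auto
qed simp

definition edges_to :: "nat \<Rightarrow> nat set \<Rightarrow> nat set set" where
  "edges_to v Z = (\<lambda>z. {v, z}) ` Z"

lemma edges_to_subset_all_edges:
  "v \<in> {1..n} \<Longrightarrow> Z \<subseteq> {1..n} \<Longrightarrow> v \<notin> Z \<Longrightarrow> edges_to v Z \<subseteq> all_edges n"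
  unfolding edges_to_def all_edges_def by blast

lemma deg_in_eq_card_edges_to:
  assumes "v \<notin> Z"
  shows "deg_in G Z v = card {e \<in> edges_to v Z. G e}"
proof -
  have "{e \<in> edges_to v Z. G e} = (\<lambda>z. {v, z}) ` {z \<in> Z. adj G v z}"
    using assms unfolding edges_to_def adj_def by auto
  moreover have "inj_on (\<lambda>z. {v, z}) {z \<in> Z. adj G v z}"
    by (auto simp: inj_on_def doubleton_eq_iff)
  ultimately show ?thesis
    unfolding deg_in_def by (simp add: card_image)
qed

lemma depends_only_on_deg_in:
  "v \<notin> Z \<Longrightarrow> depends_only_on (edges_to v Z) (\<lambda>G. deg_in G Z v)"
  unfolding depends_only_on_def deg_in_eq_card_edges_to by (metis (mono_tags, lifting) Collect_cong)

lemma deg_in_binomial: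
  assumes "p \<in> {0..1}" "v \<in> {1..n}" "Z \<subseteq> {1..n}" "v \<notin> Z"
  shows "map_pmf (\<lambda>G. deg_in G Z v) (gnp n p) = binomial_pmf (card Z) p"
proof -
  let ?F = "edges_to v Z"
  have "map_pmf (\<lambda>G. deg_in G Z v) (gnp n p) = map_pmf (\<lambda>G. card {e \<in> ?F. G e}) (gnp n p)"
    using deg_in_eq_card_edges_to[OF assms(4)] by simp
  also have "\<dots> = map_pmf (\<lambda>G. card {e \<in> ?F. G e})
                   (map_pmf (\<lambda>G e. if e \<in> ?F then G e else False) (gnp n p))"
    unfolding pmf.map_comp o_def by (intro map_pmf_cong refl arg_cong[where f=card]) auto
  also have "map_pmf (\<lambda>G e. if e \<in> ?F then G e else False) (gnp n p) =
             Pi_pmf ?F False (\<lambda>_. bernoulli_pmf p)"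
    unfolding gnp_def using finite_all_edges edges_to_subset_all_edges[OF assms(2-4)]
    by (intro Pi_pmf_subset[symmetric])
  also have "map_pmf (\<lambda>G. card {e \<in> ?F. G e}) \<dots> = binomial_pmf (card ?F) p"
    using assms(1,3) finite_subset by (intro binomial_pmf_altdef'[symmetric]) (auto simp: edges_to_def)
  also have "card ?F = card Z"
    unfolding edges_to_def by (intro card_image) (auto simp: inj_on_def doubleton_eq_iff)
  finally show ?thesis .
qed

lemma prob_deg_in_eq:
  assumes "p \<in> {0..1}" "v \<in> {1..n}" "Z \<subseteq> {1..n}" "v \<notin> Z"
  shows "measure_pmf.prob (gnp n p) {G. deg_in G Z v = k} = pmf (binomial_pmf (card Z) p) k"
proof -
  have "measure_pmf.prob (gnp n p) {G. deg_in G Z v = k} =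
        measure_pmf.prob (map_pmf (\<lambda>G. deg_in G Z v) (gnp n p)) {k}"
    by (simp add: vimage_def)
  then show ?thesis
    unfolding deg_in_binomial[OF assms] by (simp add: measure_pmf_single)
qed

section \<open>The binomial estimate at time \<open>t\<^sub>0\<close>\<close>

lemma power_diff_le_fact_mult_choose:
  "k \<le> m \<Longrightarrow> (real m - real k) ^ k \<le> fact k * real (m choose k)"
proof (induction k arbitrary: m)
  case (Suc k)
  then obtain m' where m: "m = Suc m'" and "k \<le> m'"
    by (cases m) auto
  have "(real m - real (Suc k)) ^ Suc k = (real m - real (Suc k)) * (real m' - real k) ^ k"
    using m by simp
  also have "\<dots> \<le> real m * (fact k * real (m' choose k))"
    using Suc \<open>k \<le> m'\<close> by (intro mult_mono) auto
  also have "\<dots> = fact (Suc k) * real (m choose Suc k)"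
    using Suc_times_binomial_eq[of m' k] unfolding m by (simp add: algebra_simps flip: of_nat_mult)
  finally show ?case .
qed simp

text \<open>By Bernoulli's inequality, \<open>(t choose k)\<close> and \<open>(1 - P)\<^sup>t\<close> each lose at most a factor \<open>99/100\<close>
  against \<open>x\<^sup>k / k!\<close> and \<open>1\<close>.\<close>

lemma binomial_pmf_ge:
  fixes x P :: real and t k :: nat
  assumes "0 < P" "P \<le> 1" "100 * real (Suc k) ^ 2 \<le> x" "x * P \<le> 1/100"
    and "x - 1 \<le> real t" "real t \<le> x"
  shows "(99/100) ^ 2 * ((x * P) ^ k / fact k) \<le> pmf (binomial_pmf t P) k"
proof -
  have "100 * real (Suc k) \<le> 100 * real (Suc k) ^ 2"
    using self_le_power[of "real (Suc k)" 2] by simp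
  then have xr: "100 * real (Suc k) \<le> x"
    using assms(3) by (rule order_trans)
  then have "0 < x"
    by (rule less_le_trans[rotated]) simp
  have "real k \<le> real t"
    using xr assms(5) by simp
  then have "k \<le> t"
    by simp
  have "x ^ k * (99/100) \<le> x ^ k * (1 + (- real (Suc k) / x)) ^ k"
  proof (intro mult_left_mono)
    have "real k * real (Suc k) \<le> real (Suc k) ^ 2"
      by (simp add: power2_eq_square)
    then have "99/100 \<le> 1 + real k * (- real (Suc k) / x)"
      using assms(3) \<open>0 < x\<close> by (simp add: field_simps)
    also have "\<dots> \<le> (1 + (- real (Suc k) / x)) ^ k"
      using xr \<open>0 < x\<close> by (intro Bernoulli_inequality) (simp add: field_simps)
    finally show "99/100 \<le> (1 + (- real (Suc k) / x)) ^ k" .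
  qed (use \<open>0 < x\<close> in simp)
  also have "\<dots> = (x - real (Suc k)) ^ k"
    using \<open>0 < x\<close> by (simp add: power_mult_distrib[symmetric] field_simps)
  also have "\<dots> \<le> (real t - real k) ^ k"
    using xr assms(5) by (intro power_mono) auto
  also have "\<dots> \<le> fact k * real (t choose k)"
    using \<open>k \<le> t\<close> by (rule power_diff_le_fact_mult_choose)
  finally have choose: "x ^ k * (99/100) / fact k \<le> real (t choose k)"
    by (simp add: field_simps)
  have "real t * P \<le> x * P"
    using assms(1,6) by (intro mult_right_mono) auto
  then have "99/100 \<le> 1 + real t * (- P)"
    using assms(4) by linarith
  also have "\<dots> \<le> (1 - P) ^ t"
    using Bernoulli_inequality[of "- P" t] assms(2) by simp
  also have "\<dots> \<le> (1 - P) ^ (t - k)"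
    using assms(1,2) by (intro power_decreasing) auto
  finally have survive: "99/100 \<le> (1 - P) ^ (t - k)" .
  have "(99/100) ^ 2 * ((x * P) ^ k / fact k) = (x ^ k * (99/100) / fact k) * P ^ k * (99/100)"
    by (simp add: power_mult_distrib power2_eq_square)
  also have "\<dots> \<le> real (t choose k) * P ^ k * (1 - P) ^ (t - k)"
    using choose survive assms(1) by (intro mult_mono) auto
  also have "\<dots> = pmf (binomial_pmf t P) k"
    using assms(1,2) by (simp add: pmf_binomial)
  finally show ?thesis .
qed

text \<open>Writing \<open>t\<^sub>0 = \<lfloor>x\<rfloor>\<close>, the choice of \<open>t\<^sub>0\<close> is exactly what makes \<open>(x P)\<^sup>k / k! = r / (n P)\<close>.\<close>

lemma t0_real_scale:
  fixes k n :: nat and P :: real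
  assumes "1 \<le> k" "1 \<le> n" "0 < P"
    and small: "real n * P ^ Suc k * (100 * real (Suc k) ^ 2) ^ k \<le> 1"
    and large: "fact (Suc k) * 100 ^ k \<le> real n * P"
  obtains x where "t0 (Suc k) n P = nat \<lfloor>x\<rfloor>" "100 * real (Suc k) ^ 2 \<le> x" "0 < x"
    "x * P \<le> 1/100" "x \<le> real n / 100" "(x * P) ^ k / fact k = real (Suc k) / (real n * P)"
proof -
  define y where "y = fact (Suc k) / (real n * P ^ Suc k)"
  define x where "x = y powr (1 / real k)"
  have "0 < y"
    unfolding y_def using assms(2,3) by simp
  then have "0 < x" and xk: "x ^ k = y"
    unfolding x_def using assms(1) by (simp_all add: powr_powr flip: powr_realpow)
  have "(100 * real (Suc k) ^ 2) ^ k \<le> y"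
    using small assms(2,3) fact_ge_1[of "Suc k", where 'a=real]
    unfolding y_def by (simp add: field_simps)
  then have "100 * real (Suc k) ^ 2 \<le> x"
    using xk \<open>0 < x\<close> assms(1) power_mono_iff[of "100 * real (Suc k) ^ 2" x k] by simp
  have xP: "(x * P) ^ k = fact (Suc k) / (real n * P)"
    unfolding power_mult_distrib xk y_def using assms(2,3) by (simp add: field_simps)
  also have "\<dots> \<le> (1/100) ^ k"
    using large assms(2,3)
    by (simp add: divide_le_eq power_one_over mult.commute pos_le_divide_eq)
  finally have "x * P \<le> 1/100"
    using assms(1,3) \<open>0 < x\<close> by (simp add: power_mono_iff)
  have "(1::real) \<le> fact (Suc k)" "(1::real) \<le> 100 ^ k"
    by (rule fact_ge_1) simp
  then have "1 \<le> real n * P"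
    using large mult_mono[of 1 "fact (Suc k)" 1 "100 ^ k :: real"] by simp
  then have "(100 * x) * P \<le> real n * P"
    using \<open>x * P \<le> 1/100\<close> by linarith
  then have "x \<le> real n / 100"
    using assms(3) by simp
  moreover have "(x * P) ^ k / fact k = real (Suc k) / (real n * P)"
    unfolding xP using assms(2,3) by (simp add: field_simps)
  moreover have "t0 (Suc k) n P = nat \<lfloor>x\<rfloor>"
    unfolding t0_def x_def y_def by simp
  ultimately show ?thesis
    using that \<open>100 * real (Suc k) ^ 2 \<le> x\<close> \<open>0 < x\<close> \<open>x * P \<le> 1/100\<close> by blast
qed

lemma t0_estimate:
  fixes k n :: nat and P s :: real
  assumes "1 \<le> k" "1 \<le> n" "0 < P" "P \<le> 1"
    and small: "real n * P ^ Suc k * (100 * real (Suc k) ^ 2) ^ k \<le> 1"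
    and large: "fact (Suc k) * 100 ^ k \<le> real n * P"
    and "s \<le> real n / 100"
  shows "9/10 * real (Suc k) / P \<le>
         pmf (binomial_pmf (t0 (Suc k) n P) P) k * (real n - real (t0 (Suc k) n P) - s)"
proof -
  obtain x where t0: "t0 (Suc k) n P = nat \<lfloor>x\<rfloor>" and x: "100 * real (Suc k) ^ 2 \<le> x" "0 < x"
    "x * P \<le> 1/100" "x \<le> real n / 100" "(x * P) ^ k / fact k = real (Suc k) / (real n * P)"
    using t0_real_scale[OF assms(1-3) small large] by blast
  let ?t = "t0 (Suc k) n P"
  have "x - 1 \<le> real ?t" "real ?t \<le> x"
    unfolding t0 using \<open>0 < x\<close> by linarith+
  then have "(99/100) ^ 2 * (real (Suc k) / (real n * P)) \<le> pmf (binomial_pmf ?t P) k"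
    using binomial_pmf_ge[OF assms(3,4) x(1,3)] x(5) by simp
  moreover have "98/100 * real n \<le> real n - real ?t - s"
    using \<open>real ?t \<le> x\<close> x(4) assms(7) by simp
  ultimately have "((99/100) ^ 2 * (real (Suc k) / (real n * P))) * (98/100 * real n) \<le>
                   pmf (binomial_pmf ?t P) k * (real n - real ?t - s)"
    using assms(3) by (intro mult_mono) auto
  moreover have "9/10 * real (Suc k) / P \<le>
                 ((99/100) ^ 2 * (real (Suc k) / (real n * P))) * (98/100 * real n)"
    using assms(2,3) by (simp add: field_simps)
  ultimately show ?thesis
    by linarith
qed

lemma power_bound_of_powr_bound:
  fixes P c :: real and n r :: nat
  assumes "1 \<le> n" "1 \<le> r" "0 < P" "0 \<le> c" "c \<le> 1"
    and "P \<le> c * real n powr (- 1 / real r)"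
  shows "P \<le> c" "real n * P ^ r \<le> c"
proof -
  have "0 < real n"
    using assms(1) by simp
  define u where "u = real n powr (- 1 / real r)"
  have "0 < u"
    unfolding u_def using \<open>0 < real n\<close> by simp
  have "u \<le> real n powr 0"
    unfolding u_def using assms(1) by (intro powr_mono) auto
  then have "u \<le> 1"
    using \<open>0 < real n\<close> by simp
  have "u ^ r = real n powr (- 1 / real r * real r)"
    unfolding u_def using \<open>0 < real n\<close> by (simp add: powr_powr flip: powr_realpow)
  then have u_pow: "u ^ r = 1 / real n"
    using assms(2) \<open>0 < real n\<close> by (simp add: powr_neg_one)
  show "P \<le> c"
    using assms(4,6) \<open>u \<le> 1\<close> mult_left_le[of u c] unfolding u_def[symmetric] by linarith
  have "P ^ r \<le> (c * u) ^ r"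
    using assms(3,6) unfolding u_def[symmetric] by (intro power_mono) auto
  also have "\<dots> \<le> c * u ^ r"
    using power_decreasing[of 1 r c] assms(2,4,5) \<open>0 < u\<close> by (simp add: power_mult_distrib)
  also have "\<dots> = c / real n"
    unfolding u_pow by simp
  finally show "real n * P ^ r \<le> c"
    using \<open>0 < real n\<close> by (simp add: pos_le_divide_eq mult.commute)
qed

lemma eventually_t0_estimate:
  fixes r :: nat and p s :: "nat \<Rightarrow> real"
  assumes "2 \<le> r" and p_large: "(\<lambda>n. 1 / real n) \<in> o(p)"
    and p_small: "p \<in> o(\<lambda>n. real n powr (- 1 / real r))"
    and s_small: "s \<in> o(\<lambda>n. real n)"
  shows "\<forall>\<^sub>F n in sequentially. 0 < p n \<longrightarrow> p n \<le> 1/2 \<and>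
    9/10 * real r / p n \<le> pmf (binomial_pmf (t0 r n (p n)) (p n)) (r - 1) *
                            (real n - real (t0 r n (p n)) - s n)"
proof -
  obtain k where r: "r = Suc k" and "1 \<le> k"
    using assms(1) by (cases r) auto
  define X where "X = (100 * real r ^ 2) ^ k"
  have "1 \<le> real r ^ 2"
    using assms(1) by (intro one_le_power) simp
  then have "1 \<le> X"
    unfolding X_def by (intro one_le_power) simp
  have "\<forall>\<^sub>F n in sequentially. norm (p n) \<le> 1 / X * norm (real n powr (- 1 / real r))"
    using \<open>1 \<le> X\<close> by (intro landau_o.smallD[OF p_small]) simp
  moreover have "\<forall>\<^sub>F n in sequentially. norm (p n) \<le> 1/2 * norm (real n powr (- 1 / real r))"
    by (rule landau_o.smallD[OF p_small]) simp
  moreover have "\<forall>\<^sub>F n in sequentially. norm (1 / real n) \<le> 1 / (fact r * 100 ^ k) * norm (p n)"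
    by (rule landau_o.smallD[OF p_large]) simp
  moreover have "\<forall>\<^sub>F n in sequentially. norm (s n) \<le> 1/100 * norm (real n)"
    by (rule landau_o.smallD[OF s_small]) simp
  moreover have "\<forall>\<^sub>F n in sequentially. 1 \<le> n"
    by (rule eventually_ge_at_top)
  ultimately show ?thesis
  proof eventually_elim
    case (elim n)
    show ?case
    proof (intro impI conjI)
      assume "0 < p n"
      have "0 < real n"
        using elim(5) by simp
      have half: "p n \<le> 1/2 * real n powr (- 1 / real r)"
        using elim(2) \<open>0 < p n\<close> by simp
      show "p n \<le> 1/2"
        using power_bound_of_powr_bound(1)[OF elim(5) _ \<open>0 < p n\<close> _ _ half] assms(1) by simp
      have inverse_X: "p n \<le> 1 / X * real n powr (- 1 / real r)"
        using elim(1) \<open>0 < p n\<close> by simp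
      have "real n * p n ^ r \<le> 1 / X"
        using power_bound_of_powr_bound(2)[OF elim(5) _ \<open>0 < p n\<close> _ _ inverse_X] assms(1) \<open>1 \<le> X\<close>
        by simp
      then have small: "real n * p n ^ Suc k * (100 * real (Suc k) ^ 2) ^ k \<le> 1"
        using \<open>1 \<le> X\<close> unfolding X_def r by (simp add: pos_le_divide_eq)
      have "1 / real n \<le> p n / (fact r * 100 ^ k)"
        using elim(3) \<open>0 < p n\<close> by simp
      then have "fact r * 100 ^ k * (1 / real n) * real n \<le>
                 fact r * 100 ^ k * (p n / (fact r * 100 ^ k)) * real n"
        using \<open>0 < real n\<close> by (intro mult_right_mono mult_left_mono) auto
      then have large: "fact (Suc k) * 100 ^ k \<le> real n * p n"
        using \<open>0 < real n\<close> unfolding r by (simp add: mult.commute)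
      have "s n \<le> real n / 100"
        using elim(4) by simp
      with t0_estimate[OF \<open>1 \<le> k\<close> elim(5) \<open>0 < p n\<close> _ small large] \<open>p n \<le> 1/2\<close>
      show "9/10 * real r / p n \<le> pmf (binomial_pmf (t0 r n (p n)) (p n)) (r - 1) *
                            (real n - real (t0 r n (p n)) - s n)"
        unfolding r by simp
    qed
  qed
qed

section \<open>Conditioning on the history of the process\<close>

lemma prod_of_bool: "finite A \<Longrightarrow> (\<Prod>x\<in>A. of_bool (P x) :: 'a::comm_semiring_1) = of_bool (\<forall>x\<in>A. P x)"
  by (induction A rule: finite_induct) auto

lemma chernoff_exponent_le:
  fixes q P w k :: real and r :: nat
  assumes "2 \<le> r" "0 < P" "0 \<le> q" "q \<le> 1" "0 \<le> k"
    and "9/10 * real r / P \<le> q * (w + k)"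
  shows "1/10 * (3 * real r / (4 * P) - k) - (1 - exp (- 1/10)) * q * w \<le> - (1/100) / P"
proof -
  define \<delta> :: real where "\<delta> = 1 - exp (- 1/10)"
  have "\<delta> \<le> 1/10"
    unfolding \<delta>_def using exp_ge_add_one_self[of "- 1/10"] by simp
  have "exp (- 1/10) \<le> 1 / (1 + 1/10 :: real)"
    using exp_ge_add_one_self[of "1/10"] by (simp add: exp_minus field_simps)
  then have "1/11 \<le> \<delta>"
    unfolding \<delta>_def by simp
  have "\<delta> * q * k \<le> 1/10 * k"
    using \<open>\<delta> \<le> 1/10\<close> \<open>1/11 \<le> \<delta>\<close> assms(3-5) mult_mono[of \<delta> "1/10" q 1] by (intro mult_right_mono) auto
  moreover have "1/11 * (9/10 * real r / P) \<le> \<delta> * (q * (w + k))"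
    using \<open>1/11 \<le> \<delta>\<close> assms(2,6) by (intro mult_mono) auto
  moreover have "1/10 * (3 * real r / (4 * P)) - 1/11 * (9/10 * real r / P) \<le> - (1/100) / P"
    using assms(1,2) by (simp add: field_simps)
  ultimately show ?thesis
    unfolding \<delta>_def[symmetric] by (simp add: algebra_simps)
qed

text \<open>Given the history, a free vertex imposes on its edges to \<open>Z0\<close> only the event of
  having fewer than \<open>r\<close> of them (or nothing if it is initially infected); a forced vertex
  is infected but unexplored, hence already has at least \<open>r\<close> neighbours in \<open>Z0\<close>.\<close>

locale conditioning = exploration +
  fixes t :: nat and A0 Z0 S :: "nat set"
  assumes history_nonempty: "history t A0 Z0 \<noteq> {}"
    and finite_S: "finite S"
begin

definition free_vertices :: "nat set" where
  "free_vertices = {v \<in> {1..n} - (Z0 \<union> S). a < v \<longrightarrow> v \<notin> A0}"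

definition forced_vertices :: "nat set" where
  "forced_vertices = {v \<in> {1..n} - (Z0 \<union> S). a < v \<and> v \<in> A0}"

definition free_edges :: "nat set set" where
  "free_edges = (\<Union>v\<in>free_vertices. edges_to v Z0)"

definition delete_free_edges :: "(nat set \<Rightarrow> bool) \<Rightarrow> nat set \<Rightarrow> bool" where
  "delete_free_edges G = (\<lambda>e. G e \<and> e \<notin> free_edges)"

lemma finite_free_vertices: "finite free_vertices"
  unfolding free_vertices_def by simp

lemma free_vertex_D:
  assumes "v \<in> free_vertices"
  shows "v \<in> {1..n}" "v \<notin> Z0"
  using assms unfolding free_vertices_def by auto

lemma history_D:
  assumes "G \<in> history t A0 Z0"
  shows "Zp n a r rule G t = Z0" "infected n a r G Z0 = A0"
  using assms unfolding history_def Ap_def by auto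

lemma card_Z0: "card Z0 = t" and Z0_subset: "Z0 \<subseteq> {1..n}"
proof -
  obtain G where G: "G \<in> history t A0 Z0"
    using history_nonempty by blast
  then show "card Z0 = t"
    using card_Zp unfolding history_def by auto
  show "Z0 \<subseteq> {1..n}"
    using G set_explore_subset unfolding history_def Zp_def by auto
qed

lemma finite_Z0: "finite Z0"
  using Z0_subset finite_subset by blast

lemma card_free_vertices_plus_forced:
  "real n - real t - real (card S) \<le> real (card free_vertices) + real (card forced_vertices)"
proof -
  have "card {1..n} - card (Z0 \<union> S) \<le> card ({1..n} - (Z0 \<union> S))"
    by (rule diff_card_le_card_Diff) (simp add: finite_Z0 finite_S)
  also have "{1..n} - (Z0 \<union> S) = free_vertices \<union> forced_vertices"
    unfolding free_vertices_def forced_vertices_def by auto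
  also have "card \<dots> = card free_vertices + card forced_vertices"
    unfolding free_vertices_def forced_vertices_def by (intro card_Un_disjoint) auto
  finally have "n \<le> t + card S + (card free_vertices + card forced_vertices)"
    using card_Un_le[of Z0 S] card_Z0 by simp
  then have "real n \<le> real (t + card S + (card free_vertices + card forced_vertices))"
    by (simp only: of_nat_le_iff)
  then show ?thesis
    by simp
qed

lemma edge_notin_free_edges:
  assumes "v \<notin> free_vertices" "z \<in> Z0"
  shows "{v, z} \<notin> free_edges"
proof
  assume "{v, z} \<in> free_edges"
  then obtain w z' where "w \<in> free_vertices" "z' \<in> Z0" "{v, z} = {w, z'}"
    unfolding free_edges_def edges_to_def by blast
  then show False
    using assms unfolding free_vertices_def by (auto simp: doubleton_eq_iff)
qed

lemma history_iff_delete_free_edges: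
  assumes "0 < r"
  shows "G \<in> history t A0 Z0 \<longleftrightarrow>
    delete_free_edges G \<in> history t A0 Z0 \<and>
    (\<forall>v\<in>free_vertices. v \<le> a \<or> deg_in G Z0 v < r)"
proof -
  let ?G' = "delete_free_edges G"
  have deg_free: "deg_in ?G' Z0 v = 0" if "v \<in> free_vertices" for v
  proof -
    have none: "{z \<in> Z0. adj ?G' v z} = {}"
      using that unfolding adj_def delete_free_edges_def free_edges_def edges_to_def by blast
    show ?thesis
      unfolding deg_in_def none by simp
  qed
  have adj_other: "adj ?G' v z = adj G v z" if "v \<notin> free_vertices" "z \<in> Z0" for v z
    using edge_notin_free_edges[OF that] unfolding adj_def delete_free_edges_def by simp
  have agree: "(\<forall>z\<in>Z0. adj G v z = adj ?G' v z) \<or> (deg_in G Z0 v < r \<and> deg_in ?G' Z0 v < r)"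
    if "v \<in> {a+1..n}" "v \<in> free_vertices \<Longrightarrow> deg_in G Z0 v < r" for v
    using that adj_other deg_free assms by (cases "v \<in> free_vertices") auto
  have low: "deg_in G Z0 v < r" if "G \<in> history t A0 Z0" "v \<in> free_vertices" "a < v" for v
    using that history_D(2)[OF that(1)] unfolding free_vertices_def infected_def deg_in_def by auto
  show ?thesis
  proof
    assume G: "G \<in> history t A0 Z0"
    then show "?G' \<in> history t A0 Z0 \<and> (\<forall>v\<in>free_vertices. v \<le> a \<or> deg_in G Z0 v < r)"
      using history_transfer[OF G agree] low by force
  next
    assume G': "?G' \<in> history t A0 Z0 \<and> (\<forall>v\<in>free_vertices. v \<le> a \<or> deg_in G Z0 v < r)"
    have "(\<forall>z\<in>Z0. adj ?G' v z = adj G v z) \<or> (deg_in ?G' Z0 v < r \<and> deg_in G Z0 v < r)"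
      if "v \<in> {a+1..n}" for v
    proof -
      have "v \<in> free_vertices \<Longrightarrow> deg_in G Z0 v < r"
        using G' that by auto
      then show ?thesis
        using agree[OF that] by auto
    qed
    then show "G \<in> history t A0 Z0"
      using history_transfer G' by blast
  qed
qed

lemma card_candidates_ge:
  assumes "G \<in> history t A0 Z0"
  shows "card forced_vertices + card {v \<in> free_vertices. r - 1 \<le> deg_in G Z0 v} \<le>
         card {v \<in> {1..n} - (Z0 \<union> S). r - 1 \<le> deg_in G Z0 v}"
proof -
  have "forced_vertices \<subseteq> {v \<in> {1..n} - (Z0 \<union> S). r - 1 \<le> deg_in G Z0 v}"
    using history_D(2)[OF assms] unfolding forced_vertices_def infected_def deg_in_def by auto
  then have sub: "forced_vertices \<union> {v \<in> free_vertices. r - 1 \<le> deg_in G Z0 v} \<subseteq>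
             {v \<in> {1..n} - (Z0 \<union> S). r - 1 \<le> deg_in G Z0 v}"
    unfolding free_vertices_def by auto
  have "finite forced_vertices"
    unfolding forced_vertices_def by simp
  moreover have "forced_vertices \<inter> free_vertices = {}"
    unfolding free_vertices_def forced_vertices_def by auto
  ultimately have "card forced_vertices + card {v \<in> free_vertices. r - 1 \<le> deg_in G Z0 v} =
                   card (forced_vertices \<union> {v \<in> free_vertices. r - 1 \<le> deg_in G Z0 v})"
    using finite_free_vertices by (intro card_Un_disjoint[symmetric]) auto
  also have "\<dots> \<le> card {v \<in> {1..n} - (Z0 \<union> S). r - 1 \<le> deg_in G Z0 v}"
    by (intro card_mono sub) simp
  finally show ?thesis .
qed

definition few_candidates :: "real \<Rightarrow> (nat set \<Rightarrow> bool) set" where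
  "few_candidates \<theta> = {G. real (card {v \<in> {1..n} - (Zp n a r rule G t \<union> S).
     r - 1 \<le> card {z \<in> Zp n a r rule G t. adj G v z}}) < \<theta>}"

definition below_threshold :: "nat \<Rightarrow> (nat set \<Rightarrow> bool) \<Rightarrow> real" where
  "below_threshold v G = of_bool (v \<le> a \<or> deg_in G Z0 v < r)"

definition damped_below_threshold :: "real \<Rightarrow> nat \<Rightarrow> (nat set \<Rightarrow> bool) \<Rightarrow> real" where
  "damped_below_threshold c v G = below_threshold v G * exp (- c * of_bool (r - 1 \<le> deg_in G Z0 v))"

lemma prod_below_threshold:
  "(\<Prod>v\<in>free_vertices. below_threshold v G) = of_bool (\<forall>v\<in>free_vertices. v \<le> a \<or> deg_in G Z0 v < r)"
  unfolding below_threshold_def by (rule prod_of_bool[OF finite_free_vertices])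

lemma indicator_history_factor:
  assumes "0 < r"
  shows "(indicator (history t A0 Z0) G :: real) =
    indicator (history t A0 Z0) (delete_free_edges G) * (\<Prod>v\<in>free_vertices. below_threshold v G)"
  using history_iff_delete_free_edges[OF assms, of G]
  unfolding prod_below_threshold by (simp add: indicator_def)

lemma indicator_few_candidates_le:
  assumes "0 < r" "0 \<le> c"
  shows "(indicator (few_candidates \<theta> \<inter> history t A0 Z0) G :: real) \<le>
    exp (c * (\<theta> - card forced_vertices)) *
    (indicator (history t A0 Z0) (delete_free_edges G) *
     (\<Prod>v\<in>free_vertices. damped_below_threshold c v G))"
proof (cases "G \<in> few_candidates \<theta> \<inter> history t A0 Z0")
  case True
  let ?N = "card {v \<in> free_vertices. r - 1 \<le> deg_in G Z0 v}"
  have "real (card forced_vertices + ?N) < \<theta>"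
    using True card_candidates_ge[of G] history_D(1)[of G]
    unfolding few_candidates_def deg_in_def by force
  have "delete_free_edges G \<in> history t A0 Z0" "(\<Prod>v\<in>free_vertices. below_threshold v G) = 1"
    using True history_iff_delete_free_edges[OF assms(1), of G]
    unfolding prod_below_threshold by auto
  then have "(\<Prod>v\<in>free_vertices. damped_below_threshold c v G) =
             (\<Prod>v\<in>free_vertices. exp (- c * of_bool (r - 1 \<le> deg_in G Z0 v)))"
    unfolding damped_below_threshold_def by (simp add: prod.distrib)
  also have "\<dots> = exp (\<Sum>v\<in>free_vertices. - c * of_bool (r - 1 \<le> deg_in G Z0 v))"
    by (rule exp_sum[OF finite_free_vertices, symmetric])
  also have "(\<Sum>v\<in>free_vertices. - c * of_bool (r - 1 \<le> deg_in G Z0 v)) = - c * real ?N"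
    using finite_free_vertices by (simp add: sum_negf sum_distrib_left[symmetric] Int_def)
  finally have "(\<Prod>v\<in>free_vertices. damped_below_threshold c v G) = exp (- c * real ?N)" .
  moreover have "c * (real (card forced_vertices) + real ?N) \<le> c * \<theta>"
    using \<open>real (card forced_vertices + ?N) < \<theta>\<close> assms(2) by (intro mult_left_mono) auto
  ultimately show ?thesis
    using True \<open>delete_free_edges G \<in> _\<close> by (simp add: exp_add[symmetric] algebra_simps)
qed (simp add: damped_below_threshold_def below_threshold_def prod_nonneg)

text \<open>Exponential-moment step: the blocks of edges from the free vertices to \<open>Z0\<close> are independent
  of each other and of the rest of the graph, and on each block the damping removes at least
  \<open>1 - e\<^sup>-\<^sup>c\<close> on the event of exactly \<open>r - 1\<close> edges, which has probability \<open>q\<close>.\<close>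

lemma expectation_damped_le:
  assumes "0 < r" "0 \<le> c" "0 \<le> P" "P \<le> 1"
  shows "measure_pmf.expectation (gnp n P) (\<lambda>G. indicator (history t A0 Z0) (delete_free_edges G) *
           (\<Prod>v\<in>free_vertices. damped_below_threshold c v G)) \<le>
         exp (- ((1 - exp (- c)) * pmf (binomial_pmf t P) (r - 1)) * card free_vertices) *
         measure_pmf.prob (gnp n P) (history t A0 Z0)"
proof -
  let ?C = "history t A0 Z0"
  have "measure_pmf.prob (gnp n P) ?C = measure_pmf.expectation (gnp n P)
          (\<lambda>G. indicator ?C (delete_free_edges G) * (\<Prod>v\<in>free_vertices. below_threshold v G))"
    unfolding indicator_history_factor[OF assms(1), symmetric]
    by (simp add: measure_pmf.emeasure_eq_measure)
  moreover have "measure_pmf.expectation (gnp n P) (\<lambda>G. indicator ?C (delete_free_edges G) *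
           (\<Prod>v\<in>free_vertices. damped_below_threshold c v G)) \<le>
         exp (- ((1 - exp (- c)) * pmf (binomial_pmf t P) (r - 1)) * card free_vertices) *
         measure_pmf.expectation (gnp n P)
           (\<lambda>G. indicator ?C (delete_free_edges G) * (\<Prod>v\<in>free_vertices. below_threshold v G))"
    unfolding gnp_def
  proof (rule expectation_prod_blocks_le[where F = "\<lambda>v. edges_to v Z0" and D = "\<lambda>v. {G. deg_in G Z0 v = r - 1}"])
    show "edges_to v Z0 \<subseteq> all_edges n" if "v \<in> free_vertices" for v
      using edges_to_subset_all_edges free_vertex_D[OF that] Z0_subset by blast
    show "disjoint_family_on (\<lambda>v. edges_to v Z0) free_vertices"
      using free_vertex_D(2) unfolding disjoint_family_on_def edges_to_def by (auto simp: doubleton_eq_iff)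
    show "depends_only_on (- (\<Union>v\<in>free_vertices. edges_to v Z0)) (\<lambda>G. indicator ?C (delete_free_edges G))"
      unfolding free_edges_def[symmetric] depends_only_on_def delete_free_edges_def
      by (auto intro!: arg_cong[where f = "indicator ?C"])
    show "depends_only_on (edges_to v Z0) (damped_below_threshold c v)" if "v \<in> free_vertices" for v
      unfolding damped_below_threshold_def[abs_def] below_threshold_def
      by (rule depends_only_on_comp[OF depends_only_on_deg_in[OF free_vertex_D(2)[OF that]],
            of "\<lambda>d. of_bool (v \<le> a \<or> d < r) * exp (- c * of_bool (r - 1 \<le> d))"])
    show "depends_only_on (edges_to v Z0) (below_threshold v)" if "v \<in> free_vertices" for v
      unfolding below_threshold_def[abs_def]
      by (rule depends_only_on_comp[OF depends_only_on_deg_in[OF free_vertex_D(2)[OF that]],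
            of "\<lambda>d. of_bool (v \<le> a \<or> d < r)"])
    show "damped_below_threshold c v G \<le>
          below_threshold v G - (1 - exp (- c)) * indicator {G. deg_in G Z0 v = r - 1} G" for v G
      using assms(1,2) unfolding damped_below_threshold_def below_threshold_def
      by (auto simp: indicator_def)
    show "measure_pmf.prob (Pi_pmf (all_edges n) False (\<lambda>_. bernoulli_pmf P)) {G. deg_in G Z0 v = r - 1} =
          pmf (binomial_pmf t P) (r - 1)" if "v \<in> free_vertices" for v
      using prob_deg_in_eq[OF _ free_vertex_D(1)[OF that] Z0_subset free_vertex_D(2)[OF that]]
        assms(3,4) card_Z0 unfolding gnp_def by simp
  qed (use assms(2) finite_all_edges finite_free_vertices in
        \<open>auto simp: damped_below_threshold_def below_threshold_def\<close>)
  ultimately show ?thesis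
    by simp
qed

theorem prob_few_candidates_le:
  fixes P :: real
  assumes "2 \<le> r" "0 < P" "P \<le> 1"
    and key: "9/10 * real r / P \<le> pmf (binomial_pmf t P) (r - 1) * (real n - real t - real (card S))"
  shows "measure_pmf.prob (gnp n P) (few_candidates (3 * real r / (4 * P)) \<inter> history t A0 Z0) \<le>
         exp (- (1/100) / P) * measure_pmf.prob (gnp n P) (history t A0 Z0)"
proof -
  let ?M = "gnp n P" and ?C = "history t A0 Z0" and ?\<theta> = "3 * real r / (4 * P)"
  let ?q = "pmf (binomial_pmf t P) (r - 1)"
  let ?L = "exp (1/10 * (?\<theta> - card forced_vertices))"
  have "0 < r"
    using assms(1) by simp
  have int: "integrable ?M f" for f :: "(nat set \<Rightarrow> bool) \<Rightarrow> real"
    unfolding gnp_def by (intro integrable_measure_pmf_finite finite_set_Pi_pmf finite_all_edges)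
  have "9/10 * real r / P \<le> ?q * (real (card free_vertices) + real (card forced_vertices))"
    using key card_free_vertices_plus_forced by (meson mult_left_mono order_trans pmf_nonneg)
  from chernoff_exponent_le[OF assms(1,2) _ _ _ this]
  have exponent: "?L * exp (- ((1 - exp (- (1/10))) * ?q) * card free_vertices) \<le> exp (- (1/100) / P)"
    using pmf_le_1[of _ "r - 1"] by (simp add: exp_add[symmetric] algebra_simps)
  have "measure_pmf.prob ?M (few_candidates ?\<theta> \<inter> ?C) =
        measure_pmf.expectation ?M (indicator (few_candidates ?\<theta> \<inter> ?C))"
    by (simp add: measure_pmf.emeasure_eq_measure)
  also have "\<dots> \<le> measure_pmf.expectation ?M (\<lambda>G. ?L * (indicator ?C (delete_free_edges G) *
                   (\<Prod>v\<in>free_vertices. damped_below_threshold (1/10) v G)))"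
    by (intro integral_mono int indicator_few_candidates_le[OF \<open>0 < r\<close>]) simp
  also have "\<dots> \<le> ?L * (exp (- ((1 - exp (- (1/10))) * ?q) * card free_vertices) *
                        measure_pmf.prob ?M ?C)"
    using expectation_damped_le[OF \<open>0 < r\<close> _ _ assms(3), of "1/10"] assms(2) by simp
  also have "\<dots> \<le> exp (- (1/100) / P) * measure_pmf.prob ?M ?C"
    unfolding mult.assoc[symmetric] using exponent by (intro mult_right_mono) auto
  finally show ?thesis .
qed

end

lemma (in exploration) conditional_prob_few_candidates_le:
  fixes P :: real
  assumes "2 \<le> r" "finite S"
    and estimate: "0 < P \<longrightarrow> P \<le> 1/2 \<and>
      9/10 * real r / P \<le> pmf (binomial_pmf t P) (r - 1) * (real n - real t - real (card S))"
    and PC: "0 < measure_pmf.prob (gnp n P) (history t A0 Z0)"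
  shows "measure_pmf.prob (gnp n P)
           ({G. real (card {v \<in> {1..n} - (Zp n a r rule G t \<union> S).
                  r - 1 \<le> card {z \<in> Zp n a r rule G t. adj G v z}}) < 3 * real r / (4 * P)}
            \<inter> history t A0 Z0) / measure_pmf.prob (gnp n P) (history t A0 Z0)
         \<le> exp (- (1/100) / P)"
proof -
  interpret conditioning n a r rule t A0 Z0 S
    using PC assms(2) by unfold_locales auto
  show ?thesis
    unfolding few_candidates_def[symmetric]
  proof (cases "0 < P")
    case False
    then have "3 * real r / (4 * P) \<le> 0"
      by (simp add: divide_nonneg_nonpos)
    then have "few_candidates (3 * real r / (4 * P)) = {}"
      unfolding few_candidates_def by (smt (verit) empty_Collect_eq of_nat_0_le_iff)
    then show "measure_pmf.prob (gnp n P) (few_candidates (3 * real r / (4 * P)) \<inter> history t A0 Z0) /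
               measure_pmf.prob (gnp n P) (history t A0 Z0) \<le> exp (- (1/100) / P)"
      by simp
  next
    case True
    with estimate have "P \<le> 1"
      and key: "9/10 * real r / P \<le> pmf (binomial_pmf t P) (r - 1) * (real n - real t - real (card S))"
      by auto
    from prob_few_candidates_le[OF assms(1) True this]
    show "measure_pmf.prob (gnp n P) (few_candidates (3 * real r / (4 * P)) \<inter> history t A0 Z0) /
          measure_pmf.prob (gnp n P) (history t A0 Z0) \<le> exp (- (1/100) / P)"
      using PC by (simp add: pos_divide_le_eq)
  qed
qed

theorem lemma4:
  fixes r :: nat and p :: "nat \<Rightarrow> real" and a :: "nat \<Rightarrow> nat"
    and S :: "nat \<Rightarrow> nat set"
    and rule :: "nat \<Rightarrow> nat list \<Rightarrow> nat set \<Rightarrow> nat"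
  assumes "r \<ge> 2"
    and "(\<lambda>n. 1 / real n) \<in> o(p)"
    and "p \<in> o(\<lambda>n. real n powr (- 1 / real r))"
    and "\<forall>n. a n \<le> n"
    and "\<forall>n. S n \<subseteq> {1..n}"
    and "(\<lambda>n. real (card (S n))) \<in> o(\<lambda>n. real n)"
    and "\<forall>n us A. A - set us \<noteq> {} \<longrightarrow> rule n us A \<in> A - set us"
  shows "\<exists>c>0. \<forall>\<^sub>F n in sequentially. \<forall>A0 Z0.
     (let P = measure_pmf.prob (gnp n (p n));
          tt = t0 r n (p n);
          C = {G. tt \<le> stop_time n (a n) r (rule n) G
                  \<and> Ap n (a n) r (rule n) G tt = A0 \<and> Zp n (a n) r (rule n) G tt = Z0};
          B = {G. real (card {v \<in> {1..n} - (Zp n (a n) r (rule n) G tt \<union> S n).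
                     r - 1 \<le> card {z \<in> Zp n (a n) r (rule n) G tt. adj G v z}})
                  < 3 * real r / (4 * p n)}
      in P C > 0 \<longrightarrow> P (B \<inter> C) / P C \<le> exp (- c / p n))"
proof (intro exI[of _ "1/100"] conjI, simp,
    use eventually_t0_estimate[OF assms(1-3,6)] in eventually_elim)
  case (elim n)
  interpret exploration n "a n" r "rule n"
    using assms(4,7) by unfold_locales blast+
  have "finite (S n)"
    using assms(5) finite_subset by blast
  show ?case
    unfolding Let_def history_def[symmetric]
    using conditional_prob_few_candidates_le[OF assms(1) \<open>finite (S n)\<close> elim] by blast
qed

end
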